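(* Let $G$ be a Garside group. Then the center $Z(G)$ is cyclic if and only if any two Garside elements of $G$ are commensurable. Here "Garside elements of $G$" means elements $\Delta_1,\Delta_2$ arising as Garside elements of (possibly different) Garside structures $(G,G_1^+,\Delta_1)$ and $(G,G_2^+,\Delta_2)$ on the same group $G$.
   Context: An atomic monoid is a monoid $M$ generated by its atoms (elements $a\ne1$ such that $a=bc$ implies $b=1$ or $c=1$) in which, for each $a\in M$, the supremum $\|a\|$ of lengths of expressions of $a$ as a product of atoms is finite. On $M$ define $a\le_L b$ iff $ac=b$ for some $c\in M$, and $a\le_R b$ iff $ca=b$ for some $c\in M$. A Garside monoid is an atomic monoid $M$ that is left and right cancellative, such that $(M,\le_L)$ and $(M,\le_R)$ are lattices, and containing an element $\Delta$ (a Garside element) such that (a) for each $a\in M$, $a\le_L\Delta$ iff $a\le_R\Delta$, and (b) the set $\{a\in M: a\le_L\Delta\}$ is finite and generates $M$. A Garside group is the group of fractions $G$ of a Garside monoid $M$; $M$ is identified with its image $G^+\subset G$ (the positive monoid), and the triple $(G,G^+,\Delta)$ is called a Garside structure on $G$. A group may admit several Garside structures. In any Garside structure some positive power of $\Delta$ is central. Two elements $g,h$ of a group are commensurable if $g^k$ and $h^\ell$ are conjugate for some nonzero integers $k,\ell$. *)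

theory Defs
  imports "HOL-Algebra.Algebra"
begin

definition group_center :: "('g, 'b) monoid_scheme \<Rightarrow> 'g set" where
  "group_center G = {z \<in> carrier G. \<forall>g \<in> carrier G. z \<otimes>\<^bsub>G\<^esub> g = g \<otimes>\<^bsub>G\<^esub> z}"

definition listprod :: "('g, 'b) monoid_scheme \<Rightarrow> 'g list \<Rightarrow> 'g" where
  "listprod G xs = foldr (\<lambda>x y. x \<otimes>\<^bsub>G\<^esub> y) xs \<one>\<^bsub>G\<^esub>"

definition monoid_span :: "('g, 'b) monoid_scheme \<Rightarrow> 'g set \<Rightarrow> 'g set" where
  "monoid_span G S = {listprod G xs | xs. set xs \<subseteq> S}"

definition leL :: "('g, 'b) monoid_scheme \<Rightarrow> 'g set \<Rightarrow> 'g \<Rightarrow> 'g \<Rightarrow> bool" where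
  "leL G P a b \<longleftrightarrow> (\<exists>c \<in> P. a \<otimes>\<^bsub>G\<^esub> c = b)"

definition leR :: "('g, 'b) monoid_scheme \<Rightarrow> 'g set \<Rightarrow> 'g \<Rightarrow> 'g \<Rightarrow> bool" where
  "leR G P a b \<longleftrightarrow> (\<exists>c \<in> P. c \<otimes>\<^bsub>G\<^esub> a = b)"

definition is_lattice_on :: "'g set \<Rightarrow> ('g \<Rightarrow> 'g \<Rightarrow> bool) \<Rightarrow> bool" where
  "is_lattice_on P rel \<longleftrightarrow>
     (\<forall>a \<in> P. rel a a) \<and>
     (\<forall>a \<in> P. \<forall>b \<in> P. rel a b \<and> rel b a \<longrightarrow> a = b) \<and>
     (\<forall>a \<in> P. \<forall>b \<in> P. \<forall>c \<in> P. rel a b \<and> rel b c \<longrightarrow> rel a c) \<and>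
     (\<forall>a \<in> P. \<forall>b \<in> P.
        (\<exists>s \<in> P. rel a s \<and> rel b s \<and> (\<forall>u \<in> P. rel a u \<and> rel b u \<longrightarrow> rel s u)) \<and>
        (\<exists>i \<in> P. rel i a \<and> rel i b \<and> (\<forall>l \<in> P. rel l a \<and> rel l b \<longrightarrow> rel l i)))"

definition atoms :: "('g, 'b) monoid_scheme \<Rightarrow> 'g set \<Rightarrow> 'g set" where
  "atoms G P = {a \<in> P. a \<noteq> \<one>\<^bsub>G\<^esub> \<and>
     (\<forall>b \<in> P. \<forall>c \<in> P. a = b \<otimes>\<^bsub>G\<^esub> c \<longrightarrow> b = \<one>\<^bsub>G\<^esub> \<or> c = \<one>\<^bsub>G\<^esub>)}"

definition atomic_monoid :: "('g, 'b) monoid_scheme \<Rightarrow> 'g set \<Rightarrow> bool" where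
  "atomic_monoid G P \<longleftrightarrow>
     P = monoid_span G (atoms G P) \<and>
     (\<forall>a \<in> P. \<exists>N::nat. \<forall>xs. set xs \<subseteq> atoms G P \<and> listprod G xs = a \<longrightarrow> length xs \<le> N)"

text \<open>A Garside structure (G, P, Delta) on the group G: P is a submonoid of G generating G
  as a group (so G is the group of fractions of P), P is an atomic Garside monoid
  (cancellativity is automatic inside a group) with Garside element Delta.\<close>
definition garside_structure :: "('g, 'b) monoid_scheme \<Rightarrow> 'g set \<Rightarrow> 'g \<Rightarrow> bool" where
  "garside_structure G P \<Delta> \<longleftrightarrow>
     P \<subseteq> carrier G \<and> \<one>\<^bsub>G\<^esub> \<in> P \<and>
     (\<forall>a \<in> P. \<forall>b \<in> P. a \<otimes>\<^bsub>G\<^esub> b \<in> P) \<and>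
     generate G P = carrier G \<and>
     atomic_monoid G P \<and>
     is_lattice_on P (leL G P) \<and> is_lattice_on P (leR G P) \<and>
     \<Delta> \<in> P \<and>
     (\<forall>a \<in> P. leL G P a \<Delta> \<longleftrightarrow> leR G P a \<Delta>) \<and>
     finite {a \<in> P. leL G P a \<Delta>} \<and>
     monoid_span G {a \<in> P. leL G P a \<Delta>} = P"

definition garside_group :: "('g, 'b) monoid_scheme \<Rightarrow> bool" where
  "garside_group G \<longleftrightarrow> group G \<and> (\<exists>P \<Delta>. garside_structure G P \<Delta>)"

definition garside_element :: "('g, 'b) monoid_scheme \<Rightarrow> 'g \<Rightarrow> bool" where
  "garside_element G \<Delta> \<longleftrightarrow> (\<exists>P. garside_structure G P \<Delta>)"

definition commensurable :: "('g, 'b) monoid_scheme \<Rightarrow> 'g \<Rightarrow> 'g \<Rightarrow> bool" where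
  "commensurable G g h \<longleftrightarrow>
     (\<exists>(k::int) (l::int). k \<noteq> 0 \<and> l \<noteq> 0 \<and>
        (\<exists>x \<in> carrier G. inv\<^bsub>G\<^esub> x \<otimes>\<^bsub>G\<^esub> (g [^]\<^bsub>G\<^esub> k) \<otimes>\<^bsub>G\<^esub> x = h [^]\<^bsub>G\<^esub> l))"

end

theory Submission
  imports Defs
begin

(* A Garside element Delta has a central power, because conjugation by Delta permutes the finite
   set of simple elements. If Z(G) is generated by eps, the central powers of two Garside elements
   are non-trivial powers of eps, so the two elements have a common power.

   Conversely fix a Garside structure (P, Delta) and a central power Delta_c of Delta. Every central
   z becomes, after multiplication by a power of Delta_c, a central positive multiple of Delta, and
   such an element is again a Garside element for P; commensurability with Delta_c then gives
   z^l = Delta_c^k with l > 0. Central roots of positive elements are positive (a lattice argument),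
   so such a z is positive iff k >= 0. Now take a central positive eps <> 1 without proper central
   positive left divisors: division with remainder of the exponents gives q with eps^-q z positive
   and left-dividing eps, which forces eps^-q z = 1. Hence eps generates Z(G). *)

lemma listprod_Nil [simp]: "listprod G [] = \<one>\<^bsub>G\<^esub>"
  by (simp add: listprod_def)

lemma listprod_Cons [simp]: "listprod G (x # xs) = x \<otimes>\<^bsub>G\<^esub> listprod G xs"
  by (simp add: listprod_def)

lemma (in monoid) listprod_closed: "set xs \<subseteq> carrier G \<Longrightarrow> listprod G xs \<in> carrier G"
  by (induction xs) auto

lemma (in monoid) listprod_append:
  "set xs \<subseteq> carrier G \<Longrightarrow> set ys \<subseteq> carrier G \<Longrightarrow>
   listprod G (xs @ ys) = listprod G xs \<otimes> listprod G ys"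
  by (induction xs) (auto simp: m_assoc listprod_closed)

lemma monoid_span_mono: "A \<subseteq> B \<Longrightarrow> monoid_span G A \<subseteq> monoid_span G B"
  unfolding monoid_span_def by blast

lemma group_centerI:
  "z \<in> carrier G \<Longrightarrow> (\<And>g. g \<in> carrier G \<Longrightarrow> z \<otimes>\<^bsub>G\<^esub> g = g \<otimes>\<^bsub>G\<^esub> z) \<Longrightarrow> z \<in> group_center G"
  by (simp add: group_center_def)

lemma group_center_carrier: "z \<in> group_center G \<Longrightarrow> z \<in> carrier G"
  by (simp add: group_center_def)

lemma group_center_commute: "z \<in> group_center G \<Longrightarrow> g \<in> carrier G \<Longrightarrow> z \<otimes>\<^bsub>G\<^esub> g = g \<otimes>\<^bsub>G\<^esub> z"
  by (simp add: group_center_def)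

lemma (in group) inv_cancel_left [simp]:
  "x \<in> carrier G \<Longrightarrow> y \<in> carrier G \<Longrightarrow> inv x \<otimes> (x \<otimes> y) = y"
  by (simp flip: m_assoc)

lemma (in group) inv_cancel_right [simp]:
  "x \<in> carrier G \<Longrightarrow> y \<in> carrier G \<Longrightarrow> x \<otimes> (inv x \<otimes> y) = y"
  by (simp flip: m_assoc)

lemma (in group) commutant_subgroup:
  assumes z: "z \<in> carrier G"
  shows "subgroup {g \<in> carrier G. z \<otimes> g = g \<otimes> z} G"
proof (rule subgroupI)
  fix a b assume "a \<in> {g \<in> carrier G. z \<otimes> g = g \<otimes> z}" "b \<in> {g \<in> carrier G. z \<otimes> g = g \<otimes> z}"
  then have a: "a \<in> carrier G" "z \<otimes> a = a \<otimes> z" and b: "b \<in> carrier G" "z \<otimes> b = b \<otimes> z"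
    by auto
  have "z \<otimes> inv a = inv a \<otimes> (a \<otimes> z) \<otimes> inv a" using a(1) z by (simp add: m_assoc)
  also have "\<dots> = inv a \<otimes> z" using a(1) z by (simp add: m_assoc flip: a(2))
  finally show "inv a \<in> {g \<in> carrier G. z \<otimes> g = g \<otimes> z}" using a(1) by simp
  have "z \<otimes> (a \<otimes> b) = a \<otimes> (z \<otimes> b)" using a(1) b(1) z by (simp add: a(2) flip: m_assoc)
  also have "\<dots> = a \<otimes> b \<otimes> z" using a(1) b(1) z by (simp add: b(2) m_assoc)
  finally show "a \<otimes> b \<in> {g \<in> carrier G. z \<otimes> g = g \<otimes> z}" using a(1) b(1) by simp
qed (use z in auto)

lemma (in group) group_center_eq_Inter:
  "group_center G = (\<Inter>g \<in> carrier G. {z \<in> carrier G. g \<otimes> z = z \<otimes> g})"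
  unfolding group_center_def by (blast intro: sym)

lemma (in group) group_center_subgroup: "subgroup (group_center G) G"
  unfolding group_center_eq_Inter by (rule subgroups_Inter) (auto intro: commutant_subgroup)

lemma (in group) group_center_mult:
  "z \<in> group_center G \<Longrightarrow> w \<in> group_center G \<Longrightarrow> z \<otimes> w \<in> group_center G"
  by (rule subgroup.m_closed[OF group_center_subgroup])

lemma (in group) group_center_inv: "z \<in> group_center G \<Longrightarrow> inv z \<in> group_center G"
  by (rule subgroup.m_inv_closed[OF group_center_subgroup])

lemma (in group) group_center_int_pow: "z \<in> group_center G \<Longrightarrow> z [^] (k::int) \<in> group_center G"
  by (rule subgroup_int_pow_closed[OF group_center_subgroup])

lemma (in group) group_center_nat_pow: "z \<in> group_center G \<Longrightarrow> z [^] (n::nat) \<in> group_center G"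
  using group_center_int_pow[of z "int n"] by (simp add: int_pow_int)

lemma (in group) cyclic_center_iff:
  "cyclic_group (G\<lparr>carrier := group_center G\<rparr>) \<longleftrightarrow>
     (\<exists>\<epsilon> \<in> group_center G. group_center G = range (\<lambda>n::int. \<epsilon> [^] n))"
proof -
  have "group (G\<lparr>carrier := group_center G\<rparr>)"
    by (rule subgroup.subgroup_is_group[OF group_center_subgroup is_group])
  then show ?thesis
    by (simp add: group.cyclic_group int_pow_consistent[OF group_center_subgroup])
qed

lemma (in group) central_mult_swap:
  assumes x: "x \<in> group_center G" and a: "a \<in> carrier G" and c: "c \<in> carrier G" and ac: "a \<otimes> c = x"
  shows "c \<otimes> a = x"
proof -
  have xc: "x \<in> carrier G" using x by (rule group_center_carrier)
  have "c \<otimes> a = inv a \<otimes> (a \<otimes> c) \<otimes> a" using a c by (simp add: m_assoc)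
  also have "\<dots> = inv a \<otimes> (x \<otimes> a)" using a xc by (simp add: ac m_assoc)
  also have "\<dots> = x" using a xc by (simp add: group_center_commute[OF x a])
  finally show ?thesis .
qed

lemma (in group) int_pow_pos_exponent:
  assumes x: "x \<in> carrier G" and d: "d \<in> carrier G" and l: "l \<noteq> 0" and e: "x [^] (l::int) = d [^] (k::int)"
  shows "\<exists>l' > 0. \<exists>k'. x [^] (l'::int) = d [^] (k'::int)"
proof (cases "l > 0")
  case False
  have "x [^] (- l) = d [^] (- k)" using e x d by (simp add: int_pow_neg)
  then show ?thesis using False l by (intro exI[of _ "- l"]) auto
qed (use e in blast)

lemma (in group) int_pow_central_mult:
  assumes x: "x \<in> group_center G" and y: "y \<in> carrier G" and d: "d \<in> carrier G"
    and xd: "x [^] (a::int) = d [^] (b::int)" and yd: "y [^] (l::int) = d [^] (k::int)"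
  shows "(x [^] (s::int) \<otimes> y) [^] (a * l) = d [^] (s * b * l + k * a)"
proof -
  have xc: "x \<in> carrier G" using x by (rule group_center_carrier)
  have "(x [^] s \<otimes> y) [^] (a * l) = (x [^] s) [^] (a * l) \<otimes> y [^] (a * l)"
    using int_pow_mult_distrib[OF group_center_commute[OF group_center_int_pow[OF x] y]] xc y by simp
  also have "\<dots> = (x [^] a) [^] (s * l) \<otimes> (y [^] l) [^] a"
    using xc y by (simp add: int_pow_pow ac_simps)
  also have "\<dots> = d [^] (s * b * l) \<otimes> d [^] (k * a)"
    using xd yd d by (simp add: int_pow_pow ac_simps)
  also have "\<dots> = d [^] (s * b * l + k * a)"
    using d by (simp add: int_pow_mult)
  finally show ?thesis .
qed

lemma (in group) commensurable_refl: "g \<in> carrier G \<Longrightarrow> commensurable G g g"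
  unfolding commensurable_def by (rule exI[of _ 1], rule exI[of _ 1]) (auto intro!: bexI[of _ \<one>])

lemma (in group) commensurable_central:
  assumes g: "g \<in> group_center G" and "commensurable G g h"
  shows "\<exists>k l. k \<noteq> 0 \<and> l \<noteq> 0 \<and> g [^] (k::int) = h [^] (l::int)"
proof -
  obtain k l :: int and x where kl: "k \<noteq> 0" "l \<noteq> 0" and x: "x \<in> carrier G"
    and conj: "inv x \<otimes> g [^] k \<otimes> x = h [^] l"
    using assms(2) unfolding commensurable_def by blast
  have gk: "g [^] k \<in> carrier G" using group_center_carrier[OF g] by simp
  have "inv x \<otimes> g [^] k \<otimes> x = inv x \<otimes> (x \<otimes> g [^] k)"
    using x gk by (simp add: m_assoc group_center_commute[OF group_center_int_pow[OF g] x])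
  then have "g [^] k = h [^] l" using conj x gk by simp
  then show ?thesis using kl by blast
qed

lemma (in group) commensurable_if_central_powers_in_cyclic:
  assumes \<epsilon>: "\<epsilon> \<in> group_center G" and Z: "group_center G = range (\<lambda>n::int. \<epsilon> [^] n)"
    and g: "g \<in> carrier G" "m \<noteq> 0" "g [^] (m::int) \<in> group_center G" "g [^] m \<noteq> \<one>"
    and h: "h \<in> carrier G" "n \<noteq> 0" "h [^] (n::int) \<in> group_center G" "h [^] n \<noteq> \<one>"
  shows "commensurable G g h"
proof -
  obtain a b :: int where a: "g [^] m = \<epsilon> [^] a" and b: "h [^] n = \<epsilon> [^] b"
    using g(3) h(3) Z by blast
  have "a \<noteq> 0" "b \<noteq> 0" using a b g(4) h(4) by auto
  have \<epsilon>c: "\<epsilon> \<in> carrier G" using \<epsilon> by (rule group_center_carrier)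
  have "g [^] (m * b) = (g [^] m) [^] b" using g(1) by (simp add: int_pow_pow)
  also have "\<dots> = (h [^] n) [^] a" using a b \<epsilon>c by (simp add: int_pow_pow mult.commute)
  also have "\<dots> = h [^] (n * a)" using h(1) by (simp add: int_pow_pow)
  finally have "inv \<one> \<otimes> g [^] (m * b) \<otimes> \<one> = h [^] (n * a)" using g(1) h(1) by simp
  moreover have "m * b \<noteq> 0" "n * a \<noteq> 0" using g(2) h(2) \<open>a \<noteq> 0\<close> \<open>b \<noteq> 0\<close> by simp_all
  ultimately show ?thesis unfolding commensurable_def by blast
qed

locale garside = group G for G (structure) +
  fixes P :: "'a set" and \<Delta> :: 'a
  assumes garside_structure: "garside_structure G P \<Delta>"
begin

abbreviation lel (infix "\<preceq>" 50) where "a \<preceq> b \<equiv> leL G P a b"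

abbreviation simples where "simples \<equiv> {a \<in> P. a \<preceq> \<Delta>}"

lemma pos_carrier [simp]: "a \<in> P \<Longrightarrow> a \<in> carrier G"
  using garside_structure by (auto simp: garside_structure_def)

lemma one_pos [simp]: "\<one> \<in> P"
  using garside_structure by (simp add: garside_structure_def)

lemma mult_pos [intro, simp]: "a \<in> P \<Longrightarrow> b \<in> P \<Longrightarrow> a \<otimes> b \<in> P"
  using garside_structure by (simp add: garside_structure_def)

lemma generate_pos: "generate G P = carrier G"
  using garside_structure by (simp add: garside_structure_def)

lemma atomic: "atomic_monoid G P"
  using garside_structure by (simp add: garside_structure_def)

lemma lattice_leL: "is_lattice_on P (leL G P)"
  using garside_structure by (simp add: garside_structure_def)

lemma lattice_leR: "is_lattice_on P (leR G P)"
  using garside_structure by (simp add: garside_structure_def)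

lemma Delta_pos [simp]: "\<Delta> \<in> P"
  using garside_structure by (simp add: garside_structure_def)

lemma leL_Delta_iff_leR: "a \<in> P \<Longrightarrow> a \<preceq> \<Delta> \<longleftrightarrow> leR G P a \<Delta>"
  using garside_structure by (simp add: garside_structure_def)

lemma finite_simples: "finite simples"
  using garside_structure by (simp add: garside_structure_def)

lemma monoid_span_simples: "monoid_span G simples = P"
  using garside_structure by (simp add: garside_structure_def)

lemma lel_refl: "a \<in> P \<Longrightarrow> a \<preceq> a"
  using lattice_leL unfolding is_lattice_on_def by blast

lemma lel_antisym: "a \<in> P \<Longrightarrow> b \<in> P \<Longrightarrow> a \<preceq> b \<Longrightarrow> b \<preceq> a \<Longrightarrow> a = b"
  using lattice_leL unfolding is_lattice_on_def by blast

lemma lel_trans: "a \<in> P \<Longrightarrow> b \<in> P \<Longrightarrow> c \<in> P \<Longrightarrow> a \<preceq> b \<Longrightarrow> b \<preceq> c \<Longrightarrow> a \<preceq> c"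
  using lattice_leL unfolding is_lattice_on_def by blast

lemma lel_join:
  "a \<in> P \<Longrightarrow> b \<in> P \<Longrightarrow> \<exists>s \<in> P. a \<preceq> s \<and> b \<preceq> s \<and> (\<forall>u \<in> P. a \<preceq> u \<and> b \<preceq> u \<longrightarrow> s \<preceq> u)"
  using lattice_leL unfolding is_lattice_on_def by blast

lemma lel_meet:
  "a \<in> P \<Longrightarrow> b \<in> P \<Longrightarrow> \<exists>i \<in> P. i \<preceq> a \<and> i \<preceq> b \<and> (\<forall>l \<in> P. l \<preceq> a \<and> l \<preceq> b \<longrightarrow> l \<preceq> i)"
  using lattice_leL unfolding is_lattice_on_def by blast

lemma lelI: "c \<in> P \<Longrightarrow> a \<otimes> c = b \<Longrightarrow> a \<preceq> b"
  by (auto simp: leL_def)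

lemma lel_mult_right: "a \<in> P \<Longrightarrow> c \<in> P \<Longrightarrow> a \<preceq> a \<otimes> c"
  by (auto simp: leL_def)

lemma lel_mult_left: "p \<in> P \<Longrightarrow> a \<in> P \<Longrightarrow> a \<preceq> b \<Longrightarrow> p \<otimes> a \<preceq> p \<otimes> b"
  unfolding leL_def by (metis m_assoc pos_carrier)

lemma lel_cancel_left:
  "p \<in> carrier G \<Longrightarrow> a \<in> carrier G \<Longrightarrow> b \<in> carrier G \<Longrightarrow> p \<otimes> a \<preceq> p \<otimes> b \<Longrightarrow> a \<preceq> b"
  unfolding leL_def by (metis l_cancel m_assoc m_closed pos_carrier)

lemma pos_mult_eq_one: assumes "a \<in> P" "b \<in> P" "a \<otimes> b = \<one>" shows "a = \<one>"
proof -
  have "a \<preceq> \<one>" using assms(2,3) by (rule lelI)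
  moreover have "\<one> \<preceq> a" using assms(1) by (intro lelI[of a]) simp_all
  ultimately show ?thesis using lel_antisym assms by simp
qed

lemma nat_pow_pos [intro, simp]: "x \<in> P \<Longrightarrow> x [^] (n::nat) \<in> P"
  by (induction n) auto

lemma int_pow_pos: "x \<in> P \<Longrightarrow> 0 \<le> k \<Longrightarrow> x [^] (k::int) \<in> P"
  by (metis nat_pow_pos pow_nat)

lemma pos_nat_pow_eq_one: assumes x: "x \<in> P" and "n > 0" "x [^] (n::nat) = \<one>" shows "x = \<one>"
proof -
  obtain m where "n = Suc m" using \<open>n > 0\<close> gr0_implies_Suc by blast
  then have "x \<otimes> x [^] m = \<one>" using assms(3) nat_pow_Suc2[of x m] x by simp
  then show ?thesis using pos_mult_eq_one x by blast
qed

lemma listprod_pos: "set xs \<subseteq> P \<Longrightarrow> listprod G xs \<in> P"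
  by (induction xs) auto

lemma monoid_span_pos: "A \<subseteq> P \<Longrightarrow> monoid_span G A \<subseteq> P"
  unfolding monoid_span_def using listprod_pos by blast

lemma atom_mem_factorisation:
  "a \<in> atoms G P \<Longrightarrow> set xs \<subseteq> P \<Longrightarrow> listprod G xs = a \<Longrightarrow> a \<in> set xs"
proof (induction xs)
  case Nil
  have "a = \<one>" using Nil.prems(3) by simp
  then show ?case using Nil.prems(1) unfolding atoms_def by blast
next
  case (Cons x xs)
  have x: "x \<in> P" and xs: "listprod G xs \<in> P" using Cons.prems(2) listprod_pos by auto
  have "a = x \<otimes> listprod G xs" using Cons.prems(3) by simp
  then have "x = \<one> \<or> listprod G xs = \<one>" using Cons.prems(1) x xs unfolding atoms_def by blast
  then show ?case
  proof
    assume "x = \<one>"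
    then have "listprod G xs = a" using Cons.prems(3) xs by simp
    then show ?thesis using Cons.IH Cons.prems(1,2) by simp
  next
    assume "listprod G xs = \<one>"
    then show ?thesis using Cons.prems(3) x by simp
  qed
qed

lemma atoms_subset_simples: "atoms G P \<subseteq> simples"
proof
  fix a assume a: "a \<in> atoms G P"
  then have "a \<in> monoid_span G simples" using monoid_span_simples by (simp add: atoms_def)
  then obtain xs where "set xs \<subseteq> simples" "listprod G xs = a" by (auto simp: monoid_span_def)
  then show "a \<in> simples" using atom_mem_factorisation[OF a, of xs] by auto
qed

lemma finite_atoms: "finite (atoms G P)"
  using finite_subset[OF atoms_subset_simples finite_simples] .

lemma ex_atom_factorisation:
  assumes "a \<in> P" shows "\<exists>xs. set xs \<subseteq> atoms G P \<and> listprod G xs = a"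
proof -
  have "P = monoid_span G (atoms G P)" using atomic unfolding atomic_monoid_def by (rule conjunct1)
  then have "a \<in> monoid_span G (atoms G P)" using assms by (rule subst)
  then show ?thesis unfolding monoid_span_def by blast
qed

lemma finite_left_divisors: assumes x: "x \<in> P" shows "finite {a \<in> P. a \<preceq> x}"
proof -
  have "\<forall>a \<in> P. \<exists>N::nat. \<forall>xs. set xs \<subseteq> atoms G P \<and> listprod G xs = a \<longrightarrow> length xs \<le> N"
    using atomic unfolding atomic_monoid_def by (rule conjunct2)
  then obtain N where N: "\<And>xs. set xs \<subseteq> atoms G P \<Longrightarrow> listprod G xs = x \<Longrightarrow> length xs \<le> N"
    using x by blast
  have atoms_carrier: "atoms G P \<subseteq> carrier G" by (auto simp: atoms_def)
  have "{a \<in> P. a \<preceq> x} \<subseteq> listprod G ` {xs. set xs \<subseteq> atoms G P \<and> length xs \<le> N}"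
  proof
    fix a assume "a \<in> {a \<in> P. a \<preceq> x}"
    then obtain c where a: "a \<in> P" and c: "c \<in> P" "a \<otimes> c = x" by (auto simp: leL_def)
    obtain xs ys where xs: "set xs \<subseteq> atoms G P" "listprod G xs = a"
      and ys: "set ys \<subseteq> atoms G P" "listprod G ys = c"
      using ex_atom_factorisation[OF a] ex_atom_factorisation[OF c(1)] by blast
    then have "listprod G (xs @ ys) = x"
      using listprod_append[of xs ys] atoms_carrier c(2) by auto
    then have "length (xs @ ys) \<le> N" using N[of "xs @ ys"] xs(1) ys(1) by simp
    then show "a \<in> listprod G ` {xs. set xs \<subseteq> atoms G P \<and> length xs \<le> N}"
      using xs by force
  qed
  moreover have "finite {xs. set xs \<subseteq> atoms G P \<and> length xs \<le> N}"
    by (rule finite_lists_length_le[OF finite_atoms])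
  ultimately show ?thesis using finite_subset by blast
qed

lemma ex_simple_factorisation:
  assumes "a \<in> P" shows "\<exists>xs. set xs \<subseteq> simples \<and> listprod G xs = a"
proof -
  have "a \<in> monoid_span G simples" using assms by (simp add: monoid_span_simples)
  then show ?thesis unfolding monoid_span_def by blast
qed

lemma inv_mult_pos_if_lel: "a \<in> P \<Longrightarrow> a \<preceq> b \<Longrightarrow> inv a \<otimes> b \<in> P"
  by (auto simp: leL_def)

text \<open>Conjugation by \<open>\<Delta>\<close> is the square of the complement map \<open>s \<mapsto> s\<inverse>\<Delta>\<close>, which
  preserves simples because left and right divisors of \<open>\<Delta>\<close> agree.\<close>

lemma conj_Delta_simple: assumes s: "s \<in> simples" shows "inv \<Delta> \<otimes> s \<otimes> \<Delta> \<in> simples"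
proof -
  obtain t where t: "t \<in> P" "s \<otimes> t = \<Delta>" using s by (auto simp: leL_def)
  then have "t \<preceq> \<Delta>" using s leL_Delta_iff_leR by (auto simp: leR_def)
  then obtain u where u: "u \<in> P" "t \<otimes> u = \<Delta>" by (auto simp: leL_def)
  have "inv \<Delta> \<otimes> s \<otimes> \<Delta> = inv (s \<otimes> t) \<otimes> s \<otimes> (t \<otimes> u)" using t u by simp
  also have "\<dots> = u" using s t(1) u(1) by (simp add: inv_mult_group m_assoc)
  finally show ?thesis using t u leL_Delta_iff_leR by (auto simp: leR_def)
qed

lemma conj_Delta_pow_simple:
  assumes s: "s \<in> simples" shows "inv (\<Delta> [^] (k::nat)) \<otimes> s \<otimes> \<Delta> [^] k \<in> simples"
proof (induction k)
  case 0
  then show ?case using s by simp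
next
  case (Suc k)
  have "inv (\<Delta> [^] Suc k) \<otimes> s \<otimes> \<Delta> [^] Suc k = inv \<Delta> \<otimes> (inv (\<Delta> [^] k) \<otimes> s \<otimes> \<Delta> [^] k) \<otimes> \<Delta>"
    using s by (simp add: inv_mult_group m_assoc)
  then show ?case using conj_Delta_simple[OF Suc.IH] by simp
qed

lemma center_if_commutes_with_simples:
  assumes g: "g \<in> carrier G" and comm: "\<And>s. s \<in> simples \<Longrightarrow> g \<otimes> s = s \<otimes> g"
  shows "g \<in> group_center G"
proof -
  let ?C = "{h \<in> carrier G. g \<otimes> h = h \<otimes> g}"
  have C: "subgroup ?C G" using g by (rule commutant_subgroup)
  have "listprod G xs \<in> ?C" if "set xs \<subseteq> simples" for xs
    using that
  proof (induction xs)
    case Nil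
    then show ?case using subgroup.one_closed[OF C] by simp
  next
    case (Cons x xs)
    then have "x \<in> ?C" using comm by simp
    then show ?case using Cons subgroup.m_closed[OF C] by simp
  qed
  then have "P \<subseteq> ?C" using ex_simple_factorisation by blast
  then have "carrier G \<subseteq> ?C" using generate_subgroup_incl[OF _ C] generate_pos by blast
  then show ?thesis using g by (auto intro!: group_centerI)
qed

text \<open>Conjugation by the powers of \<open>\<Delta>\<close> maps the finite set of simples into itself, so two
  different powers act identically on it; their quotient commutes with the simples, which generate
  \<open>G\<close>.\<close>

lemma ex_central_Delta_power: "\<exists>m > 0. \<Delta> [^] (m::nat) \<in> group_center G"
proof -
  define conj where "conj k = restrict (\<lambda>s. inv (\<Delta> [^] k) \<otimes> s \<otimes> \<Delta> [^] k) simples" for k :: nat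
  have "conj k \<in> simples \<rightarrow>\<^sub>E simples" for k
    unfolding conj_def restrict_PiE_iff using conj_Delta_pow_simple by blast
  then have "range conj \<subseteq> simples \<rightarrow>\<^sub>E simples" by blast
  moreover have "finite (simples \<rightarrow>\<^sub>E simples)"
    using finite_simples by (intro finite_PiE) auto
  ultimately have "\<not> inj conj"
    using finite_subset finite_imageD infinite_UNIV_nat by blast
  then obtain i j where ij: "conj i = conj j" "i < j"
    by (metis injI linorder_neqE_nat)
  define m where "m = j - i"
  have "\<Delta> [^] m \<otimes> s = s \<otimes> \<Delta> [^] m" if s: "s \<in> simples" for s
  proof -
    have "inv (\<Delta> [^] i) \<otimes> s \<otimes> \<Delta> [^] i = inv (\<Delta> [^] (m + i)) \<otimes> s \<otimes> \<Delta> [^] (m + i)"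
      using fun_cong[OF ij(1), of s] s ij(2) by (simp add: conj_def m_def)
    also have "\<dots> = inv (\<Delta> [^] i) \<otimes> (inv (\<Delta> [^] m) \<otimes> s \<otimes> \<Delta> [^] m) \<otimes> \<Delta> [^] i"
      using s by (simp add: inv_mult_group m_assoc flip: nat_pow_mult)
    finally have "s = inv (\<Delta> [^] m) \<otimes> s \<otimes> \<Delta> [^] m" using s by simp
    then have "\<Delta> [^] m \<otimes> s = \<Delta> [^] m \<otimes> (inv (\<Delta> [^] m) \<otimes> s \<otimes> \<Delta> [^] m)"
      by (rule arg_cong)
    also have "\<dots> = s \<otimes> \<Delta> [^] m" using s by (simp add: m_assoc)
    finally show ?thesis .
  qed
  moreover have "m > 0" using ij(2) by (simp add: m_def)
  ultimately show ?thesis using center_if_commutes_with_simples by auto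
qed

definition central_exp :: nat where
  "central_exp = (SOME m. m > 0 \<and> \<Delta> [^] m \<in> group_center G)"

abbreviation \<Delta>\<^sub>c :: 'a where "\<Delta>\<^sub>c \<equiv> \<Delta> [^] central_exp"

lemma
  shows central_exp_pos: "central_exp > 0"
    and Delta_c_center: "\<Delta>\<^sub>c \<in> group_center G"
  using someI_ex[OF ex_central_Delta_power] unfolding central_exp_def by auto

lemma Delta_c_pos [simp]: "\<Delta>\<^sub>c \<in> P"
  by simp

lemma Delta_lel_Delta_c: "\<Delta> \<preceq> \<Delta>\<^sub>c"
proof -
  obtain k where "central_exp = Suc k" using central_exp_pos gr0_implies_Suc by blast
  then have "\<Delta> \<otimes> \<Delta> [^] k = \<Delta>\<^sub>c" by (metis nat_pow_Suc2 Delta_pos pos_carrier)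
  then show ?thesis by (intro lelI[of "\<Delta> [^] k"]) simp_all
qed

lemma inv_mult_Delta_c_pow_pos: assumes "p \<in> P" shows "\<exists>k::nat. inv p \<otimes> \<Delta>\<^sub>c [^] k \<in> P"
proof -
  obtain xs where xs: "set xs \<subseteq> simples" "listprod G xs = p"
    using ex_simple_factorisation[OF assms] by blast
  have "\<exists>k::nat. inv (listprod G xs) \<otimes> \<Delta>\<^sub>c [^] k \<in> P" using xs(1)
  proof (induction xs)
    case Nil
    show ?case by (intro exI[of _ 0]) simp
  next
    case (Cons x xs)
    then obtain k :: nat where k: "inv (listprod G xs) \<otimes> \<Delta>\<^sub>c [^] k \<in> P" by auto
    have x: "x \<in> P" "x \<preceq> \<Delta>\<^sub>c"
      using Cons.prems lel_trans[OF _ Delta_pos Delta_c_pos _ Delta_lel_Delta_c] by auto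
    have l: "listprod G xs \<in> P" using Cons.prems listprod_pos by auto
    have c: "\<Delta>\<^sub>c [^] k \<otimes> inv x = inv x \<otimes> \<Delta>\<^sub>c [^] k"
      using group_center_commute[OF group_center_nat_pow[OF Delta_c_center]] x by simp
    have "inv (listprod G (x # xs)) \<otimes> \<Delta>\<^sub>c [^] Suc k = inv (listprod G xs) \<otimes> (inv x \<otimes> \<Delta>\<^sub>c [^] k) \<otimes> \<Delta>\<^sub>c"
      using x l by (simp add: inv_mult_group m_assoc)
    also have "\<dots> = (inv (listprod G xs) \<otimes> \<Delta>\<^sub>c [^] k) \<otimes> (inv x \<otimes> \<Delta>\<^sub>c)"
      using x l by (simp add: m_assoc flip: c)
    finally show ?case using k inv_mult_pos_if_lel[OF x] by (metis mult_pos)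
  qed
  then show ?thesis using xs(2) by simp
qed

lemma mult_Delta_c_pow_pos: assumes g: "g \<in> carrier G" shows "\<exists>n::nat. g \<otimes> \<Delta>\<^sub>c [^] n \<in> P"
proof -
  have "\<exists>n::nat. h \<otimes> \<Delta>\<^sub>c [^] n \<in> P" if "h \<in> generate G P" for h
    using that
  proof (induction rule: generate.induct)
    case one
    show ?case by (intro exI[of _ 0]) simp
  next
    case (incl h)
    then show ?case by (intro exI[of _ 0]) simp
  next
    case (inv h)
    then show ?case using inv_mult_Delta_c_pow_pos by blast
  next
    case (eng h1 h2)
    then obtain n1 n2 :: nat where n: "h1 \<otimes> \<Delta>\<^sub>c [^] n1 \<in> P" "h2 \<otimes> \<Delta>\<^sub>c [^] n2 \<in> P" by blast
    have h: "h1 \<in> carrier G" "h2 \<in> carrier G" using eng.hyps generate_pos by auto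
    have c: "h2 \<otimes> \<Delta>\<^sub>c [^] n1 = \<Delta>\<^sub>c [^] n1 \<otimes> h2"
      using group_center_commute[OF group_center_nat_pow[OF Delta_c_center] h(2)] by simp
    have "h1 \<otimes> h2 \<otimes> \<Delta>\<^sub>c [^] (n1 + n2) = h1 \<otimes> (h2 \<otimes> \<Delta>\<^sub>c [^] n1) \<otimes> \<Delta>\<^sub>c [^] n2"
      using h by (simp add: m_assoc flip: nat_pow_mult)
    also have "\<dots> = (h1 \<otimes> \<Delta>\<^sub>c [^] n1) \<otimes> (h2 \<otimes> \<Delta>\<^sub>c [^] n2)"
      using h by (simp add: c m_assoc)
    finally show ?case using n by (metis mult_pos)
  qed
  then show ?thesis using g generate_pos by blast
qed

lemma finite_glb_exists:
  "finite Y \<Longrightarrow> Y \<noteq> {} \<Longrightarrow> Y \<subseteq> P \<Longrightarrow>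
   \<exists>a \<in> P. (\<forall>y \<in> Y. a \<preceq> y) \<and> (\<forall>b \<in> P. (\<forall>y \<in> Y. b \<preceq> y) \<longrightarrow> b \<preceq> a)"
proof (induction Y rule: finite_ne_induct)
  case (singleton y)
  then show ?case using lel_refl by auto
next
  case (insert y Y)
  then obtain a where a: "a \<in> P" "\<forall>z \<in> Y. a \<preceq> z" "\<forall>b \<in> P. (\<forall>z \<in> Y. b \<preceq> z) \<longrightarrow> b \<preceq> a"
    by auto
  obtain i where i: "i \<in> P" "i \<preceq> y" "i \<preceq> a" "\<forall>l \<in> P. l \<preceq> y \<and> l \<preceq> a \<longrightarrow> l \<preceq> i"
    using lel_meet[of y a] insert.prems a(1) by auto
  have "\<forall>z \<in> insert y Y. i \<preceq> z" using i a insert.prems lel_trans by blast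
  moreover have "\<forall>b \<in> P. (\<forall>z \<in> insert y Y. b \<preceq> z) \<longrightarrow> b \<preceq> i" using i a by auto
  ultimately show ?case using i(1) by blast
qed

lemma lel_mult_glb:
  assumes Y: "Y \<subseteq> P" and p: "p \<in> P" and x: "x \<in> P"
    and a: "a \<in> P" "\<And>b. b \<in> P \<Longrightarrow> \<forall>y \<in> Y. b \<preceq> y \<Longrightarrow> b \<preceq> a"
    and xY: "\<And>y. y \<in> Y \<Longrightarrow> x \<preceq> p \<otimes> y"
  shows "x \<preceq> p \<otimes> a"
proof -
  obtain s where s: "s \<in> P" "x \<preceq> s" "p \<preceq> s" and s_least: "\<forall>u \<in> P. x \<preceq> u \<and> p \<preceq> u \<longrightarrow> s \<preceq> u"
    using lel_join[OF x p] by blast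
  obtain f where f: "f \<in> P" "p \<otimes> f = s" using s(3) by (auto simp: leL_def)
  have "f \<preceq> y" if y: "y \<in> Y" for y
  proof -
    have yP: "y \<in> P" using y Y by blast
    have "p \<otimes> f \<preceq> p \<otimes> y" using s_least xY[OF y] lel_mult_right[OF p yP] f(2) p yP by simp
    then show ?thesis using lel_cancel_left[of p f y] p f(1) yP by simp
  qed
  then have "s \<preceq> p \<otimes> a" using lel_mult_left[OF p f(1) a(2)[OF f(1)]] f(2) by simp
  then show ?thesis using lel_trans[OF x s(1) _ s(2)] p a(1) by simp
qed

text \<open>With \<open>p = g w\<close> positive for a central positive \<open>w\<close>, left multiplication by \<open>p\<close>
  shifts the family \<open>g\<^sup>i w\<^sup>j\<^sup>-\<^sup>1\<close> by one step up to the factor \<open>w\<close>; comparing meets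
  gives \<open>w a \<preceq> p a = w a g\<close>.\<close>

lemma central_root_pos:
  assumes g: "g \<in> group_center G" and j: "j > 0" and gj: "g [^] (j::nat) \<in> P"
  shows "g \<in> P"
proof -
  have gc: "g \<in> carrier G" using g by (rule group_center_carrier)
  obtain n :: nat where "g \<otimes> \<Delta>\<^sub>c [^] n \<in> P" using mult_Delta_c_pow_pos[OF gc] by blast
  define w where "w = \<Delta>\<^sub>c [^] n"
  define p where "p = g \<otimes> w"
  have w: "w \<in> P" "w \<in> group_center G"
    unfolding w_def using group_center_nat_pow[OF Delta_c_center] by auto
  have p: "p \<in> P" "p = w \<otimes> g"
    unfolding p_def using \<open>g \<otimes> \<Delta>\<^sub>c [^] n \<in> P\<close> group_center_commute[OF g] w by (auto simp: w_def)
  have gw: "g \<otimes> w = w \<otimes> g" using group_center_commute[OF g] w by simp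
  define y where "y i = g [^] i \<otimes> w [^] (j - 1)" for i :: nat
  have y_pos: "y i \<in> P" if "i < j" for i
  proof -
    have "y i = g [^] i \<otimes> (w [^] i \<otimes> w [^] (j - 1 - i))"
      using that w by (simp add: y_def nat_pow_mult)
    also have "\<dots> = (g \<otimes> w) [^] i \<otimes> w [^] (j - 1 - i)"
      using gc w by (simp add: m_assoc pow_mult_distrib[OF gw])
    finally show ?thesis using p(1) w(1) by (simp add: p_def)
  qed
  obtain a where a: "a \<in> P" "\<forall>u \<in> y ` {..<j}. a \<preceq> u"
    and a_greatest: "\<forall>b \<in> P. (\<forall>u \<in> y ` {..<j}. b \<preceq> u) \<longrightarrow> b \<preceq> a"
    using finite_glb_exists[of "y ` {..<j}"] j y_pos by auto
  have a_le: "a \<preceq> y i" if "i \<le> j" for i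
  proof (cases "i < j")
    case False
    then have "y i = y 0 \<otimes> g [^] j"
      using that w gc group_center_commute[OF group_center_nat_pow[OF w(2)]] by (simp add: y_def)
    then show ?thesis
      using lel_trans[OF a(1) y_pos[OF j] mult_pos[OF y_pos[OF j] gj] _ lel_mult_right[OF y_pos[OF j] gj]]
        a(2) j by simp
  qed (use a(2) in auto)
  have shift: "w \<otimes> a \<preceq> p \<otimes> u" if "u \<in> y ` {..<j}" for u
  proof -
    obtain i where i: "i < j" "u = y i" using \<open>u \<in> y ` {..<j}\<close> by blast
    have "p \<otimes> y i = w \<otimes> ((g \<otimes> g [^] i) \<otimes> w [^] (j - 1))"
      using p(2) gc w by (simp add: y_def m_assoc)
    also have "g \<otimes> g [^] i = g [^] Suc i" using gc by (simp only: nat_pow_Suc2)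
    finally have "p \<otimes> y i = w \<otimes> y (Suc i)" by (simp only: y_def)
    then show ?thesis using lel_mult_left[OF w(1) a(1) a_le[of "Suc i"]] i by simp
  qed
  have "w \<otimes> a \<preceq> p \<otimes> a"
    by (rule lel_mult_glb[of "y ` {..<j}"]) (use y_pos p(1) w(1) a(1) a_greatest shift in auto)
  then obtain c where c: "c \<in> P" "w \<otimes> a \<otimes> c = p \<otimes> a" by (auto simp: leL_def)
  have "p \<otimes> a = w \<otimes> a \<otimes> g"
    using p(2) gc w a(1) group_center_commute[OF g] by (simp add: m_assoc)
  then have "c = g" using c w a(1) gc by simp
  then show ?thesis using c(1) by simp
qed

lemma Delta_c_int_pow_pos_iff:
  assumes "\<Delta>\<^sub>c \<noteq> \<one>" shows "\<Delta>\<^sub>c [^] (k::int) \<in> P \<longleftrightarrow> 0 \<le> k"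
proof
  assume k: "\<Delta>\<^sub>c [^] k \<in> P"
  show "0 \<le> k"
  proof (rule ccontr)
    assume "\<not> 0 \<le> k"
    then have e: "k = - int (nat (- k))" "nat (- k) > 0" by simp_all
    then have "\<Delta>\<^sub>c [^] nat (- k) \<otimes> \<Delta>\<^sub>c [^] k = \<one>"
      using int_pow_mult[of \<Delta>\<^sub>c "- k" k] by (simp add: pow_nat)
    then have "\<Delta>\<^sub>c [^] nat (- k) = \<one>" using pos_mult_eq_one k by simp
    then show False using pos_nat_pow_eq_one[OF Delta_c_pos e(2)] assms by simp
  qed
qed (rule int_pow_pos[OF Delta_c_pos])

lemma central_pos_iff_exponent_nonneg:
  assumes "\<Delta>\<^sub>c \<noteq> \<one>" and x: "x \<in> group_center G" and N: "N > 0"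
    and e: "x [^] (N::int) = \<Delta>\<^sub>c [^] (K::int)"
  shows "x \<in> P \<longleftrightarrow> 0 \<le> K"
proof
  assume "x \<in> P"
  then have "x [^] N \<in> P" using N by (simp add: int_pow_pos)
  then show "0 \<le> K" using e Delta_c_int_pow_pos_iff[OF assms(1)] by simp
next
  assume "0 \<le> K"
  then have "x [^] nat N \<in> P" using e N Delta_c_int_pow_pos_iff[OF assms(1)] by (simp add: pow_nat)
  then show "x \<in> P" using central_root_pos[OF x, of "nat N"] N by simp
qed

lemma garside_structure_central_multiple:
  assumes x: "x \<in> P" "x \<in> group_center G" and Delta_x: "\<Delta> \<preceq> x"
  shows "garside_structure G P x"
proof -
  have lr: "a \<preceq> x \<longleftrightarrow> leR G P a x" if a: "a \<in> P" for a
    using a central_mult_swap[OF x(2)] pos_carrier unfolding leL_def leR_def by blast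
  have "simples \<subseteq> {a \<in> P. a \<preceq> x}" using lel_trans[OF _ Delta_pos x(1) _ Delta_x] by blast
  then have "P \<subseteq> monoid_span G {a \<in> P. a \<preceq> x}"
    using monoid_span_mono[of simples _ G] monoid_span_simples by blast
  moreover have "monoid_span G {a \<in> P. a \<preceq> x} \<subseteq> P" by (rule monoid_span_pos) blast
  ultimately have span: "monoid_span G {a \<in> P. a \<preceq> x} = P" by blast
  have carrier: "P \<subseteq> carrier G" by auto
  show ?thesis unfolding garside_structure_def
  proof (intro conjI ballI)
    fix a b assume "a \<in> P" "b \<in> P" then show "a \<otimes> b \<in> P" by (rule mult_pos)
  next
    fix a assume "a \<in> P" then show "a \<preceq> x \<longleftrightarrow> leR G P a x" by (rule lr)
  qed (rule carrier one_pos generate_pos atomic lattice_leL lattice_leR x(1) finite_left_divisors[OF x(1)] span)+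
qed

lemma trivial_if_Delta_pow_eq_one:
  assumes "n > 0" "\<Delta> [^] (n::nat) = \<one>" shows "carrier G = {\<one>}"
proof -
  have "\<Delta> = \<one>" using pos_nat_pow_eq_one[OF Delta_pos assms] .
  then have "s = \<one>" if "s \<in> simples" for s
    using that pos_mult_eq_one unfolding leL_def by blast
  then have "listprod G xs = \<one>" if "set xs \<subseteq> simples" for xs
    using that by (induction xs) auto
  then have "P \<subseteq> {\<one>}" using ex_simple_factorisation by blast
  then have "generate G P \<subseteq> {\<one>}" using generate_subgroup_incl[OF _ triv_subgroup] by blast
  then show ?thesis using generate_pos by auto
qed

lemma central_rational_power:
  assumes comm: "\<And>\<Delta>1 \<Delta>2. garside_element G \<Delta>1 \<Longrightarrow> garside_element G \<Delta>2 \<Longrightarrow> commensurable G \<Delta>1 \<Delta>2"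
    and z: "z \<in> group_center G"
  shows "\<exists>l > 0. \<exists>k. z [^] (l::int) = \<Delta>\<^sub>c [^] (k::int)"
proof -
  have zc: "z \<in> carrier G" using z by (rule group_center_carrier)
  obtain n :: nat where n: "z \<otimes> \<Delta>\<^sub>c [^] n \<in> P" using mult_Delta_c_pow_pos[OF zc] by blast
  define d where "d = \<Delta>\<^sub>c [^] Suc n"
  have d: "d \<in> group_center G" unfolding d_def by (rule group_center_nat_pow[OF Delta_c_center])
  have dc: "d \<in> carrier G" using d by (rule group_center_carrier)
  have dz: "z \<otimes> d = d \<otimes> z" using group_center_commute[OF d zc] by simp
  have x: "z \<otimes> d \<in> P" "z \<otimes> d \<in> group_center G" "\<Delta> \<preceq> z \<otimes> d"
  proof -
    have "z \<otimes> d = \<Delta>\<^sub>c \<otimes> (z \<otimes> \<Delta>\<^sub>c [^] n)"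
      using zc group_center_commute[OF Delta_c_center] by (simp add: d_def m_assoc)
    then show "z \<otimes> d \<in> P" "\<Delta> \<preceq> z \<otimes> d"
      using n lel_trans[OF Delta_pos Delta_c_pos _ Delta_lel_Delta_c lel_mult_right[OF Delta_c_pos n]]
      by simp_all
    show "z \<otimes> d \<in> group_center G" using group_center_mult[OF z d] .
  qed
  have "garside_element G \<Delta>\<^sub>c" unfolding garside_element_def
    using garside_structure_central_multiple[OF Delta_c_pos Delta_c_center Delta_lel_Delta_c] by blast
  moreover have "garside_element G (z \<otimes> d)" unfolding garside_element_def
    using garside_structure_central_multiple[OF x] by blast
  ultimately obtain k l :: int where l: "l \<noteq> 0" and kl: "\<Delta>\<^sub>c [^] k = (z \<otimes> d) [^] l"
    using commensurable_central[OF Delta_c_center comm] by blast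
  have "(z \<otimes> d) [^] l = z [^] l \<otimes> \<Delta>\<^sub>c [^] (int (Suc n) * l)"
    using int_pow_mult_distrib[OF dz zc dc] int_pow_pow[of \<Delta> "int central_exp"]
    by (simp add: d_def int_pow_pow mult.assoc flip: int_pow_int)
  then have "z [^] l = \<Delta>\<^sub>c [^] k \<otimes> inv (\<Delta>\<^sub>c [^] (int (Suc n) * l))"
    using kl zc by (simp add: m_assoc)
  then have "z [^] l = \<Delta>\<^sub>c [^] (k - int (Suc n) * l)" by (simp add: int_pow_diff)
  then show ?thesis using int_pow_pos_exponent[OF zc _ l] by simp
qed

definition minimal_central :: "'a \<Rightarrow> bool" where
  "minimal_central \<epsilon> \<longleftrightarrow> \<epsilon> \<in> group_center G \<and> \<epsilon> \<in> P \<and> \<epsilon> \<noteq> \<one> \<and>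
     (\<forall>h \<in> group_center G. h \<in> P \<longrightarrow> h \<noteq> \<one> \<longrightarrow> h \<preceq> \<epsilon> \<longrightarrow> h = \<epsilon>)"

lemma ex_minimal_central:
  assumes "\<Delta>\<^sub>c \<noteq> \<one>" shows "\<exists>\<epsilon>. minimal_central \<epsilon>"
proof -
  define T where "T = {z \<in> group_center G. z \<in> P \<and> z \<noteq> \<one>}"
  define ndiv where "ndiv z = card {a \<in> P. a \<preceq> z}" for z
  have "\<Delta>\<^sub>c \<in> T" using assms Delta_c_center by (simp add: T_def)
  then obtain \<epsilon> where \<epsilon>: "\<epsilon> \<in> T" and least: "\<forall>h. h \<in> T \<longrightarrow> ndiv \<epsilon> \<le> ndiv h"
    using ex_has_least_nat[of "\<lambda>z. z \<in> T" \<Delta>\<^sub>c ndiv] by blast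
  have "h = \<epsilon>" if h: "h \<in> T" "h \<preceq> \<epsilon>" for h
  proof (rule ccontr)
    assume "h \<noteq> \<epsilon>"
    have hP: "h \<in> P" and \<epsilon>P: "\<epsilon> \<in> P" using h \<epsilon> by (auto simp: T_def)
    have "{a \<in> P. a \<preceq> h} \<subset> {a \<in> P. a \<preceq> \<epsilon>}"
      using lel_trans[OF _ hP \<epsilon>P _ h(2)] lel_refl[OF \<epsilon>P] lel_antisym[OF hP \<epsilon>P h(2)] \<open>h \<noteq> \<epsilon>\<close> \<epsilon>P
      by blast
    then have "ndiv h < ndiv \<epsilon>"
      unfolding ndiv_def by (rule psubset_card_mono[OF finite_left_divisors[OF \<epsilon>P]])
    then show False using least h(1) by fastforce
  qed
  then show ?thesis using \<epsilon> unfolding minimal_central_def T_def by blast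
qed

lemma minimal_central_exponent_pos:
  assumes "\<Delta>\<^sub>c \<noteq> \<one>" "minimal_central \<epsilon>" "a > 0" "\<epsilon> [^] (a::int) = \<Delta>\<^sub>c [^] (b::int)"
  shows "b > 0"
proof -
  have \<epsilon>: "\<epsilon> \<in> group_center G" "\<epsilon> \<in> P" "\<epsilon> \<noteq> \<one>"
    using assms(2) unfolding minimal_central_def by blast+
  have "0 \<le> b" using central_pos_iff_exponent_nonneg[OF assms(1) \<epsilon>(1) assms(3,4)] \<epsilon>(2) by simp
  moreover have "b \<noteq> 0"
  proof
    assume "b = 0"
    then have "\<epsilon> [^] nat a = \<one>" using assms(3,4) by (simp add: pow_nat)
    then show False using pos_nat_pow_eq_one[OF \<epsilon>(2), of "nat a"] assms(3) \<epsilon>(3) by simp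
  qed
  ultimately show ?thesis by simp
qed

lemma minimal_central_absorbs:
  assumes "minimal_central \<epsilon>" and h: "h \<in> group_center G" "h \<in> P"
    and "inv h \<otimes> \<epsilon> \<in> P" and "h \<otimes> inv \<epsilon> \<notin> P"
  shows "h = \<one>"
proof (rule ccontr)
  assume "h \<noteq> \<one>"
  have \<epsilon>: "\<epsilon> \<in> P" using assms(1) unfolding minimal_central_def by blast
  have "h \<otimes> (inv h \<otimes> \<epsilon>) = \<epsilon>" using h(2) \<epsilon> by simp
  then have "h \<preceq> \<epsilon>" using assms(4) by (rule lelI[rotated])
  then have "h = \<epsilon>" using assms(1) h \<open>h \<noteq> \<one>\<close> unfolding minimal_central_def by blast
  then show False using assms(5) \<epsilon> by simp
qed

text \<open>Reduce \<open>z\<close> modulo \<open>\<epsilon>\<close>: \<open>x t = \<epsilon>\<^sup>-\<^sup>t z\<close> is positive exactly for \<open>t\<close> up to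
  \<open>(k a) div (b l)\<close>, and minimality of \<open>\<epsilon>\<close> forces \<open>x\<close> to vanish there.\<close>

lemma central_in_powers_of_minimal:
  assumes \<Delta>\<^sub>c: "\<Delta>\<^sub>c \<noteq> \<one>" and \<epsilon>: "minimal_central \<epsilon>"
    and a: "a > 0" "\<epsilon> [^] (a::int) = \<Delta>\<^sub>c [^] (b::int)"
    and z: "z \<in> group_center G" "l > 0" "z [^] (l::int) = \<Delta>\<^sub>c [^] (k::int)"
  shows "z \<in> range (\<lambda>n::int. \<epsilon> [^] n)"
proof -
  have \<epsilon>C: "\<epsilon> \<in> group_center G" using \<epsilon> unfolding minimal_central_def by blast
  have \<epsilon>c: "\<epsilon> \<in> carrier G" and zc: "z \<in> carrier G" using \<epsilon>C z(1) by (auto intro: group_center_carrier)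
  define x where "x t = \<epsilon> [^] (- t) \<otimes> z" for t :: int
  have x_center: "x t \<in> group_center G" for t
    unfolding x_def using group_center_mult[OF group_center_int_pow[OF \<epsilon>C] z(1)] .
  have al: "a * l > 0" using a(1) z(2) by simp
  have x_pow: "x t [^] (a * l) = \<Delta>\<^sub>c [^] (k * a - t * (b * l))" for t
    unfolding x_def using int_pow_central_mult[OF \<epsilon>C zc _ a(2) z(3)] by (simp add: algebra_simps)
  have x_pos_iff: "x t \<in> P \<longleftrightarrow> t * (b * l) \<le> k * a" for t
    using central_pos_iff_exponent_nonneg[OF \<Delta>\<^sub>c x_center al x_pow] by simp
  have "inv (x t) [^] (a * l) = \<Delta>\<^sub>c [^] (- (k * a - t * (b * l)))" for t
    using x_pow x_center[THEN group_center_carrier] by (simp add: int_pow_inv flip: int_pow_neg)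
  then have inv_x_pos_iff: "inv (x t) \<in> P \<longleftrightarrow> k * a \<le> t * (b * l)" for t
    using central_pos_iff_exponent_nonneg[OF \<Delta>\<^sub>c group_center_inv[OF x_center] al] by simp
  define q where "q = (k * a) div (b * l)"
  have bl: "b * l > 0" using minimal_central_exponent_pos[OF \<Delta>\<^sub>c \<epsilon> a] z(2) by simp
  have "k * a - q * (b * l) = (k * a) mod (b * l)"
    unfolding q_def by (rule minus_div_mult_eq_mod)
  then have "q * (b * l) \<le> k * a" "k * a < (q + 1) * (b * l)"
    using pos_mod_sign[OF bl, of "k * a"] pos_mod_bound[OF bl, of "k * a"]
    by (simp_all add: distrib_right)
  then have "x q \<in> P" "x (q + 1) \<notin> P" "inv (x (q + 1)) \<in> P"
    using x_pos_iff inv_x_pos_iff by auto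
  moreover have "x q \<otimes> inv \<epsilon> = x (q + 1)"
  proof -
    have "x q \<otimes> inv \<epsilon> = \<epsilon> [^] (- q) \<otimes> \<epsilon> [^] (- 1::int) \<otimes> z"
      using \<epsilon>c zc group_center_commute[OF group_center_inv[OF \<epsilon>C] zc]
      by (simp add: x_def m_assoc int_pow_neg)
    also have "\<dots> = x (q + 1)" using \<epsilon>c by (simp add: x_def flip: int_pow_mult)
    finally show ?thesis .
  qed
  moreover have "inv (x q \<otimes> inv \<epsilon>) = inv (x q) \<otimes> \<epsilon>"
    using group_center_commute[OF \<epsilon>C] x_center[THEN group_center_carrier] \<epsilon>c
    by (simp add: inv_mult_group)
  ultimately have "x q = \<one>" using minimal_central_absorbs[OF \<epsilon> x_center] by metis
  then have "z = \<epsilon> [^] q" using \<epsilon>c zc by (simp add: x_def int_pow_neg inv_solve_left')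
  then show ?thesis by blast
qed

lemma cyclic_center_if_garside_elements_commensurable:
  assumes "\<And>\<Delta>1 \<Delta>2. garside_element G \<Delta>1 \<Longrightarrow> garside_element G \<Delta>2 \<Longrightarrow> commensurable G \<Delta>1 \<Delta>2"
  shows "\<exists>\<epsilon> \<in> group_center G. group_center G = range (\<lambda>n::int. \<epsilon> [^] n)"
proof (cases "\<Delta>\<^sub>c = \<one>")
  case True
  then have "group_center G = {\<one>}"
    using trivial_if_Delta_pow_eq_one[OF central_exp_pos] by (auto simp: group_center_def)
  then show ?thesis by auto
next
  case False
  obtain \<epsilon> where \<epsilon>: "minimal_central \<epsilon>" using ex_minimal_central[OF False] by blast
  then have \<epsilon>C: "\<epsilon> \<in> group_center G" by (simp add: minimal_central_def)
  obtain a b :: int where a: "a > 0" "\<epsilon> [^] a = \<Delta>\<^sub>c [^] b"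
    using central_rational_power[OF assms \<epsilon>C] by blast
  have "group_center G \<subseteq> range (\<lambda>n::int. \<epsilon> [^] n)"
    using central_in_powers_of_minimal[OF False \<epsilon> a] central_rational_power[OF assms] by blast
  moreover have "range (\<lambda>n::int. \<epsilon> [^] n) \<subseteq> group_center G"
    using group_center_int_pow[OF \<epsilon>C] by blast
  ultimately show ?thesis using \<epsilon>C by blast
qed

end

lemma (in group) garside_elements_commensurable_if_cyclic_center:
  assumes \<epsilon>: "\<epsilon> \<in> group_center G" "group_center G = range (\<lambda>n::int. \<epsilon> [^] n)"
    and "garside_element G \<Delta>1" "garside_element G \<Delta>2"
  shows "commensurable G \<Delta>1 \<Delta>2"
proof -
  obtain P1 P2 where "garside_structure G P1 \<Delta>1" "garside_structure G P2 \<Delta>2"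
    using assms(3,4) unfolding garside_element_def by blast
  then interpret D1: garside G P1 \<Delta>1 + D2: garside G P2 \<Delta>2
    by (simp_all add: garside_def garside_axioms_def is_group)
  show ?thesis
  proof (cases "carrier G = {\<one>}")
    case True
    then show ?thesis using D1.Delta_pos D2.Delta_pos D1.pos_carrier D2.pos_carrier commensurable_refl
      by (metis singletonD)
  next
    case False
    then have "D1.\<Delta>\<^sub>c \<noteq> \<one>" "D2.\<Delta>\<^sub>c \<noteq> \<one>"
      using D1.trivial_if_Delta_pow_eq_one[OF D1.central_exp_pos]
        D2.trivial_if_Delta_pow_eq_one[OF D2.central_exp_pos] by auto
    then show ?thesis
      using commensurable_if_central_powers_in_cyclic[OF \<epsilon>, of \<Delta>1 "int D1.central_exp" \<Delta>2 "int D2.central_exp"]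
        D1.Delta_c_center D2.Delta_c_center D1.central_exp_pos D2.central_exp_pos
      by (simp add: int_pow_int)
  qed
qed

theorem mainTheorem1:
  assumes "garside_group G"
  shows "cyclic_group (G\<lparr>carrier := group_center G\<rparr>) \<longleftrightarrow>
    (\<forall>\<Delta>1 \<Delta>2. garside_element G \<Delta>1 \<and> garside_element G \<Delta>2 \<longrightarrow> commensurable G \<Delta>1 \<Delta>2)"
proof -
  interpret group G using assms by (simp add: garside_group_def)
  obtain P \<Delta> where "garside_structure G P \<Delta>" using assms by (auto simp: garside_group_def)
  then interpret garside G P \<Delta> by (simp add: garside_def garside_axioms_def is_group)
  show ?thesis
    unfolding cyclic_center_iff
    using garside_elements_commensurable_if_cyclic_center cyclic_center_if_garside_elements_commensurable
    by blast
qed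

end
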